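(* For all integers $n\ge1$ and $i\ge1$, $[a_n,e_i^{-1}]\in\mathcal A$, and $$[a_n,e_i^{-1}]\equiv a_{n+i}(\bar n)\pmod{t^{n+i+1}},$$ where $\bar n\in\{0,1\}$ with $\bar n\equiv n\pmod 2$; that is, $[a_n,e_i^{-1}]=(g,t)$ with $g\equiv 1+\bar n\,t^{n+i}\pmod{t^{n+i+1}}$.
   Context: Work in the Riordan group $\mathcal R(\mathbb F_2)$ of pairs $(g,f)$ of formal power series over $\mathbb F_2$ with $g=1+\cdots$, $f=t+\cdots$, with product $(g_1,f_1)(g_2,f_2)=(g_1\cdot(g_2\circ f_1),\,f_2\circ f_1)$. $\mathcal A=\{(g,t)\}$ is the Appell subgroup. For $k\ge1$, $a_k(\beta)=(1+\beta t^k,t)$ for $\beta\in\mathbb F_2$, $a_k=a_k(1)$, and $e_i=(1,t+t^{i+1})$. The commutator is $[x,y]=x^{-1}y^{-1}xy$. *)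

theory Defs
  imports "HOL-Computational_Algebra.Formal_Power_Series" "HOL-Library.Z2"
begin

text \<open>Riordan group over F_2 (type bit). A pair (g,f) with g = 1 + ..., f = t + ... .
  Note: (a oo b) is the composition a(b(t)).\<close>

type_synonym riordan = "bit fps \<times> bit fps"

definition riordan_set :: "riordan set" where
  "riordan_set = {(g, f). fps_nth g 0 = 1 \<and> fps_nth f 0 = 0 \<and> fps_nth f 1 = 1}"

definition rmult :: "riordan \<Rightarrow> riordan \<Rightarrow> riordan" where
  "rmult x y = (fst x * (fst y oo snd x), snd y oo snd x)"

definition rone :: riordan where
  "rone = (1, fps_X)"

definition rinv :: "riordan \<Rightarrow> riordan" where
  "rinv x = (THE y. y \<in> riordan_set \<and> rmult x y = rone)"

definition rcomm :: "riordan \<Rightarrow> riordan \<Rightarrow> riordan" where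
  "rcomm x y = rmult (rmult (rmult (rinv x) (rinv y)) x) y"

definition appell :: "riordan set" where
  "appell = {(g, f). (g, f) \<in> riordan_set \<and> f = fps_X}"

definition aa :: "nat \<Rightarrow> bit \<Rightarrow> riordan" where
  "aa k \<beta> = (1 + fps_const \<beta> * fps_X ^ k, fps_X)"

definition ee :: "nat \<Rightarrow> riordan" where
  "ee i = (1, fps_X + fps_X ^ (i + 1))"

end

theory Submission
  imports Defs
begin

text \<open>The commutator of an Appell element \<open>(g, t)\<close> with the inverse of an element \<open>(1, f)\<close>
  of the associated subgroup is the Appell element \<open>(g\<^sup>-\<^sup>1 \<cdot> (g \<circ> f), t)\<close>. For
  \<open>g = 1 + t\<^sup>n\<close> and \<open>f = t (1 + t\<^sup>i)\<close> the binomial theorem gives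
  \<open>g \<circ> f = 1 + t\<^sup>n (1 + t\<^sup>i)\<^sup>n = g + n t\<^sup>n\<^sup>+\<^sup>i + O(t\<^sup>n\<^sup>+\<^sup>2\<^sup>i)\<close>, hence
  \<open>g\<^sup>-\<^sup>1 \<cdot> (g \<circ> f) = 1 + n t\<^sup>n\<^sup>+\<^sup>i + O(t\<^sup>n\<^sup>+\<^sup>i\<^sup>+\<^sup>1)\<close>, and over \<open>\<bbbF>\<^sub>2\<close> the integer \<open>n\<close> is its parity.\<close>

lemma fps_inv_nth_0 [simp]: "fps_nth (fps_inv (f :: 'a::field fps)) 0 = 0"
  by (simp add: fps_inv_def)

lemma fps_inv_nth_1 [simp]: "fps_nth f (Suc 0) = (1 :: 'a::field) \<Longrightarrow> fps_nth (fps_inv f) (Suc 0) = 1"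
  by (simp add: fps_inv_def)

lemma rinv_riordan:
  assumes "(g, f) \<in> riordan_set"
  shows "rinv (g, f) = (inverse g oo fps_inv f, fps_inv f)"
proof -
  have g0: "fps_nth g 0 = 1" and f0: "fps_nth f 0 = 0" and f1: "fps_nth f 1 = 1"
    using assms by (auto simp: riordan_set_def)
  have f_inv: "f oo fps_inv f = fps_X" and inv_f: "fps_inv f oo f = fps_X"
    using fps_inv_right[of f] fps_inv[of f] f0 f1 by simp_all
  have undo_f: "h = (h oo f) oo fps_inv f" for h :: "bit fps"
    by (simp add: fps_compose_assoc[symmetric] f0 f_inv)
  let ?y = "(inverse g oo fps_inv f, fps_inv f)"
  show ?thesis
    unfolding rinv_def
  proof (rule the_equality)
    have "inverse g oo fps_inv f oo f = inverse g"
      by (simp add: fps_compose_assoc[symmetric] f0 inv_f)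
    then show "?y \<in> riordan_set \<and> rmult (g, f) ?y = rone"
      using g0 f1 inv_f inverse_mult_eq_1'[of g] by (simp add: riordan_set_def rmult_def rone_def)
  next
    fix y
    assume "y \<in> riordan_set \<and> rmult (g, f) y = rone"
    then obtain h k where y: "y = (h, k)" and "g * (h oo f) = 1" and "k oo f = fps_X"
      by (cases y) (auto simp: rmult_def rone_def)
    then have "h oo f = inverse g" and "k oo f = fps_X"
      using fps_inverse_unique[of g "h oo f"] by auto
    then show "y = ?y"
      using undo_f[of h] undo_f[of k] y by simp
  qed
qed

lemma rinv_appell: "fps_nth g 0 = 1 \<Longrightarrow> rinv (g, fps_X) = (inverse g, fps_X)"
  using rinv_riordan[of g fps_X] fps_inv[of "fps_X :: bit fps"]
  by (simp add: riordan_set_def)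

lemma rinv_rinv_associated:
  assumes "(1, f) \<in> riordan_set"
  shows "rinv (rinv (1, f)) = (1, f)"
proof -
  have "(1, fps_inv f) \<in> riordan_set"
    using assms by (simp add: riordan_set_def)
  then show ?thesis
    using assms rinv_riordan fps_inv_idempotent[of f] by (simp add: riordan_set_def)
qed

lemma rcomm_appell_rinv_associated:
  assumes "fps_nth g 0 = 1" and "(1, f) \<in> riordan_set"
  shows "rcomm (g, fps_X) (rinv (1, f)) = (inverse g * (g oo f), fps_X)"
proof -
  have f0: "fps_nth f 0 = 0" and f1: "fps_nth f 1 = 1"
    using assms(2) by (auto simp: riordan_set_def)
  have "fps_inv f oo f = fps_X"
    using fps_inv[of f] f0 f1 by simp
  then show ?thesis
    using rinv_appell[OF assms(1)] rinv_rinv_associated[OF assms(2)] rinv_riordan[OF assms(2)] f0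
    by (simp add: rcomm_def rmult_def)
qed

lemma power_one_plus_expansion:
  fixes y :: "'a::comm_ring_1"
  obtains q where "(1 + y) ^ n = 1 + of_nat n * y + y\<^sup>2 * q"
proof (induction n arbitrary: thesis)
  case 0
  from "0.prems"[of 0] show ?case by simp
next
  case (Suc n)
  then obtain q where "(1 + y) ^ n = 1 + of_nat n * y + y\<^sup>2 * q" by blast
  then have "(1 + y) ^ Suc n = 1 + of_nat (Suc n) * y + y\<^sup>2 * (of_nat n + q + y * q)"
    by (simp add: algebra_simps power2_eq_square)
  then show ?case by (rule Suc.prems)
qed

lemma inverse_mult_compose_one_plus_X_power:
  assumes "n \<ge> 1" and "i \<ge> 1"
  obtains r :: "'a::field fps"
  where "inverse (1 + fps_X ^ n) * ((1 + fps_X ^ n) oo (fps_X + fps_X ^ (i + 1)))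
           = 1 + fps_X ^ (n + i) * r"
    and "fps_nth r 0 = of_nat n"
proof -
  define g :: "'a fps" where "g = 1 + fps_X ^ n"
  define f :: "'a fps" where "f = fps_X + fps_X ^ (i + 1)"
  obtain q where q: "(1 + fps_X ^ i :: 'a fps) ^ n = 1 + of_nat n * fps_X ^ i + (fps_X ^ i)\<^sup>2 * q"
    using power_one_plus_expansion by blast
  have "g oo f = 1 + (fps_X * (1 + fps_X ^ i)) ^ n"
    by (simp add: g_def f_def fps_compose_add_distrib fps_X_power_compose algebra_simps)
  also have "\<dots> = g + fps_X ^ (n + i) * (of_nat n + fps_X ^ i * q)"
    unfolding power_mult_distrib q g_def by (simp add: algebra_simps power2_eq_square power_add)
  finally have "inverse g * (g oo f) = 1 + fps_X ^ (n + i) * (inverse g * (of_nat n + fps_X ^ i * q))"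
    using assms inverse_mult_eq_1[of g] by (simp add: g_def algebra_simps)
  moreover have "fps_nth (inverse g * (of_nat n + fps_X ^ i * q)) 0 = of_nat n"
    using assms by (simp add: g_def)
  ultimately show thesis
    using that unfolding g_def f_def by blast
qed

lemma fps_nth_one_plus_X_power_mult:
  "k \<le> m \<Longrightarrow> fps_nth (1 + fps_X ^ m * r) k = fps_nth (1 + fps_const (fps_nth r 0) * fps_X ^ m) k"
  by (cases "k = m") (simp_all add: fps_X_power_mult_nth)

lemma of_nat_bit_eq_mod_2: "(of_nat n :: bit) = of_nat (n mod 2)"
  by (induction n) (auto simp: mod_Suc)

theorem lemma9:
  fixes n i :: nat
  assumes "n \<ge> 1" and "i \<ge> 1"
  shows "rcomm (aa n 1) (rinv (ee i)) \<in> appell \<and>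
         (\<forall>k < n + i + 1.
            fps_nth (fst (rcomm (aa n 1) (rinv (ee i)))) k = fps_nth (fst (aa (n + i) (of_nat (n mod 2)))) k \<and>
            fps_nth (snd (rcomm (aa n 1) (rinv (ee i)))) k = fps_nth (snd (aa (n + i) (of_nat (n mod 2)))) k)"
proof -
  obtain r :: "bit fps"
    where r: "inverse (1 + fps_X ^ n) * ((1 + fps_X ^ n) oo (fps_X + fps_X ^ (i + 1)))
                = 1 + fps_X ^ (n + i) * r"
      and r0: "fps_nth r 0 = of_nat (n mod 2)"
    using inverse_mult_compose_one_plus_X_power[OF assms] of_nat_bit_eq_mod_2 by metis
  have "(1, fps_X + fps_X ^ (i + 1)) \<in> riordan_set"
    using assms(2) by (simp add: riordan_set_def)
  then have comm: "rcomm (aa n 1) (rinv (ee i)) = (1 + fps_X ^ (n + i) * r, fps_X)"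
    using rcomm_appell_rinv_associated[of "1 + fps_X ^ n"] assms(1) r by (simp add: aa_def ee_def)
  then have "rcomm (aa n 1) (rinv (ee i)) \<in> appell"
    using assms by (simp add: appell_def riordan_set_def fps_X_power_mult_nth)
  then show ?thesis
    unfolding comm using fps_nth_one_plus_X_power_mult[of _ "n + i" r] r0 by (simp add: aa_def)
qed

end
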